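(* There exists a temporal graph $\mathcal G$ (in the "strict" setting, i.e. with strict journeys) such that no simple temporal graph $\mathcal H$ has a strict-journey reachability graph isomorphic to $\mathcal C(\mathcal G)$. (For instance, $\mathcal G$ the path $a-b-c-d$ with $\lambda(ab)=\{1\}$, $\lambda(bc)=\{1,2\}$, $\lambda(cd)=\{2\}$.)
   Context: A temporal graph is a triple $\mathcal G=(V,E,\lambda)$ where $V$ is a finite vertex set, $E$ is a set of undirected edges on $V$, and $\lambda:E\to 2^{\mathbb N}\setminus\{\emptyset\}$ assigns to each edge a nonempty set of presence times. The footprint of $\mathcal G$ is the static graph $(V,E)$. A contact is a pair $(e,t)$ with $e\in E$ and $t\in\lambda(e)$. A journey from $u$ to $v$ is a sequence of contacts $(e_1,t_1),\dots,(e_k,t_k)$, $k\ge 1$, such that $e_1,\dots,e_k$ form a path from $u$ to $v$ in the footprint and $t_1\le t_2\le\dots\le t_k$ (a non-strict journey); it is strict if $t_1<t_2<\dots<t_k$. $\mathcal G$ is simple if $|\lambda(e)|=1$ for every edge $e$. The reachability graph $\mathcal C(\mathcal G)$ (with respect to a chosen journey notion) is the directed graph on $V$ having an arc $(u,v)$, $u\neq v$, if and only if there is a journey from $u$ to $v$. Reachability graphs are compared up to isomorphism of directed graphs. *)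

theory Defs
  imports Main
begin

type_synonym 'a tgraph = "'a set \<times> 'a set set \<times> ('a set \<Rightarrow> nat set)"

definition tverts :: "'a tgraph \<Rightarrow> 'a set" where "tverts G = fst G"
definition tedges :: "'a tgraph \<Rightarrow> 'a set set" where "tedges G = fst (snd G)"
definition tlabel :: "'a tgraph \<Rightarrow> 'a set \<Rightarrow> nat set" where "tlabel G = snd (snd G)"

definition temporal_graph :: "'a tgraph \<Rightarrow> bool" where
  "temporal_graph G \<longleftrightarrow> finite (tverts G) \<and>
     (\<forall>e\<in>tedges G. \<exists>u v. u \<noteq> v \<and> u \<in> tverts G \<and> v \<in> tverts G \<and> e = {u, v}) \<and>
     (\<forall>e\<in>tedges G. tlabel G e \<noteq> {})"

definition simple_tgraph :: "'a tgraph \<Rightarrow> bool" where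
  "simple_tgraph G \<longleftrightarrow> (\<forall>e\<in>tedges G. card (tlabel G e) = 1)"

definition strict_journey :: "'a tgraph \<Rightarrow> 'a \<Rightarrow> 'a \<Rightarrow> bool" where
  "strict_journey G u v \<longleftrightarrow> (\<exists>xs ts.
     length xs \<ge> 2 \<and> distinct xs \<and> hd xs = u \<and> last xs = v \<and>
     length ts = length xs - 1 \<and>
     (\<forall>i < length ts. {xs ! i, xs ! Suc i} \<in> tedges G \<and> ts ! i \<in> tlabel G {xs ! i, xs ! Suc i}) \<and>
     sorted_wrt (<) ts)"

definition strict_reach_arcs :: "'a tgraph \<Rightarrow> ('a \<times> 'a) set" where
  "strict_reach_arcs G = {(u, v). u \<in> tverts G \<and> v \<in> tverts G \<and> u \<noteq> v \<and> strict_journey G u v}"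

definition digraph_iso :: "'a set \<Rightarrow> ('a \<times> 'a) set \<Rightarrow> 'b set \<Rightarrow> ('b \<times> 'b) set \<Rightarrow> bool" where
  "digraph_iso V1 A1 V2 A2 \<longleftrightarrow> (\<exists>f. bij_betw f V1 V2 \<and>
     (\<forall>u\<in>V1. \<forall>v\<in>V1. (u, v) \<in> A1 \<longleftrightarrow> (f u, f v) \<in> A2))"

end

theory Submission
  imports Defs
begin

text \<open>In the path a-b-c-d with labels {1}, {1, 2}, {2}, the vertex a reaches c and b reaches d,
  but a does not reach d; non-adjacent pairs are never mutually reachable, while every edge
  gives mutual reachability. Hence any temporal graph with an isomorphic reachability graph
  has its footprint inside the corresponding path a'-b'-c'-d'. A journey a' to c' must cross
  b'c' after an a'b'-contact and a journey b' to d' must cross b'c' before a c'd'-contact; if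
  b'c' has a single time, these combine into a journey a' to d', a contradiction.\<close>

text \<open>Reachability by invariants: \<open>P x b\<close> describes a walker standing at \<open>x\<close> who may
  leave no earlier than time \<open>b\<close>.\<close>

lemma strict_journey_invariant:
  assumes "strict_journey G u v"
    and start: "P u 0"
    and step: "\<And>x y t b. P x b \<Longrightarrow> {x, y} \<in> tedges G \<Longrightarrow> t \<in> tlabel G {x, y} \<Longrightarrow> b \<le> t
                 \<Longrightarrow> P y (Suc t)"
  shows "\<exists>b. P v b"
proof -
  obtain xs ts where len: "length xs \<ge> 2" and hd: "hd xs = u" and last: "last xs = v"
    and len_ts: "length ts = length xs - 1"
    and edges: "\<forall>i < length ts. {xs ! i, xs ! Suc i} \<in> tedges G \<and> ts ! i \<in> tlabel G {xs ! i, xs ! Suc i}"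
    and sorted: "sorted_wrt (<) ts"
    using assms(1) unfolding strict_journey_def by blast
  have "P (xs ! i) (if i = 0 then 0 else Suc (ts ! (i - 1)))" if "i < length xs" for i
    using that
  proof (induction i)
    case 0
    then show ?case using start hd by (simp add: hd_conv_nth)
  next
    case (Suc i)
    have "(if i = 0 then 0 else Suc (ts ! (i - 1))) \<le> ts ! i"
      using Suc.prems len_ts sorted by (cases i) (auto simp: sorted_wrt_iff_nth_less Suc_le_eq)
    then show ?case
      using Suc edges len_ts step by simp
  qed
  moreover have "xs \<noteq> []" "length xs - 1 \<noteq> 0"
    using len by auto
  ultimately show ?thesis
    using last by (metis diff_less last_conv_nth length_greater_0_conv zero_less_one)
qed

lemma not_strict_journey_invariant:
  assumes "P u 0"
    and "\<And>x y t b. P x b \<Longrightarrow> {x, y} \<in> tedges G \<Longrightarrow> t \<in> tlabel G {x, y} \<Longrightarrow> b \<le> t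
           \<Longrightarrow> P y (Suc t)"
    and "\<And>b. \<not> P v b"
  shows "\<not> strict_journey G u v"
  using strict_journey_invariant[of G u v P] assms by blast

lemma strict_journey_edge:
  assumes "{u, v} \<in> tedges G" "t \<in> tlabel G {u, v}" "u \<noteq> v"
  shows "strict_journey G u v"
  unfolding strict_journey_def
  by (rule exI[of _ "[u, v]"], rule exI[of _ "[t]"]) (use assms in auto)

lemma strict_journey_two_edges:
  assumes "{a, b} \<in> tedges G" "t0 \<in> tlabel G {a, b}"
    and "{b, c} \<in> tedges G" "t1 \<in> tlabel G {b, c}"
    and "t0 < t1" "distinct [a, b, c]"
  shows "strict_journey G a c"
  unfolding strict_journey_def
  by (rule exI[of _ "[a, b, c]"], rule exI[of _ "[t0, t1]"])
    (use assms in \<open>auto simp: less_Suc_eq\<close>)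

lemma strict_journey_three_edges:
  assumes "{a, b} \<in> tedges G" "t0 \<in> tlabel G {a, b}"
    and "{b, c} \<in> tedges G" "t1 \<in> tlabel G {b, c}"
    and "{c, d} \<in> tedges G" "t2 \<in> tlabel G {c, d}"
    and "t0 < t1" "t1 < t2" "distinct [a, b, c, d]"
  shows "strict_journey G a d"
  unfolding strict_journey_def
  by (rule exI[of _ "[a, b, c, d]"], rule exI[of _ "[t0, t1, t2]"])
    (use assms in \<open>auto simp: less_Suc_eq nth_Cons'\<close>)

lemma strict_journey_first_two_edges:
  assumes "tedges H \<subseteq> {{a, b}, {b, c}, {c, d}}" "distinct [a, b, c, d]"
    and "strict_journey H a c"
  obtains t0 t1 where "{a, b} \<in> tedges H" "t0 \<in> tlabel H {a, b}"
    "{b, c} \<in> tedges H" "t1 \<in> tlabel H {b, c}" "t0 < t1"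
proof (rule ccontr)
  note relay = that
  assume "\<not> thesis"
  then have late: "t1 \<le> t0" if "{a, b} \<in> tedges H" "t0 \<in> tlabel H {a, b}"
    "{b, c} \<in> tedges H" "t1 \<in> tlabel H {b, c}" for t0 t1
    using relay that not_less by blast
  let ?P = "\<lambda>x s. x = a \<or> x = b \<and> (\<forall>t1 \<in> tlabel H {b, c}. {b, c} \<in> tedges H \<longrightarrow> t1 < s)"
  have "\<exists>s. ?P c s"
  proof (rule strict_journey_invariant[where P = ?P, OF assms(3)])
    fix x y t s
    assume "?P x s" "{x, y} \<in> tedges H" "t \<in> tlabel H {x, y}" "s \<le> t"
    moreover have "{x, y} \<in> {{a, b}, {b, c}, {c, d}}"
      using assms(1) \<open>{x, y} \<in> tedges H\<close> by blast
    ultimately show "?P y (Suc t)"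
      using assms(2) late by (auto simp: doubleton_eq_iff insert_commute less_Suc_eq_le)
  qed simp
  then show False
    using assms(2) by auto
qed

lemma strict_journey_last_two_edges:
  assumes "tedges H \<subseteq> {{a, b}, {b, c}, {c, d}}" "distinct [a, b, c, d]"
    and "strict_journey H b d"
  obtains t1 t2 where "{b, c} \<in> tedges H" "t1 \<in> tlabel H {b, c}"
    "{c, d} \<in> tedges H" "t2 \<in> tlabel H {c, d}" "t1 < t2"
proof (rule ccontr)
  note relay = that
  assume "\<not> thesis"
  then have early: "t2 \<le> t1" if "{b, c} \<in> tedges H" "t1 \<in> tlabel H {b, c}"
    "{c, d} \<in> tedges H" "t2 \<in> tlabel H {c, d}" for t1 t2
    using relay that not_less by blast
  let ?P = "\<lambda>x s. x = a \<or> x = b \<or> x = c \<and> (\<forall>t2 \<in> tlabel H {c, d}. {c, d} \<in> tedges H \<longrightarrow> t2 < s)"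
  have "\<exists>s. ?P d s"
  proof (rule strict_journey_invariant[where P = ?P, OF assms(3)])
    fix x y t s
    assume "?P x s" "{x, y} \<in> tedges H" "t \<in> tlabel H {x, y}" "s \<le> t"
    moreover have "{x, y} \<in> {{a, b}, {b, c}, {c, d}}"
      using assms(1) \<open>{x, y} \<in> tedges H\<close> by blast
    ultimately show "?P y (Suc t)"
      using assms(2) early by (auto simp: doubleton_eq_iff insert_commute less_Suc_eq_le)
  qed simp
  then show False
    using assms(2) by auto
qed

lemma simple_tgraph_relay:
  assumes "simple_tgraph H" "tedges H \<subseteq> {{a, b}, {b, c}, {c, d}}" "distinct [a, b, c, d]"
    and "strict_journey H a c" "strict_journey H b d"
  shows "strict_journey H a d"
proof -
  obtain t0 t1 where ab: "{a, b} \<in> tedges H" "t0 \<in> tlabel H {a, b}"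
    and bc: "{b, c} \<in> tedges H" "t1 \<in> tlabel H {b, c}" and "t0 < t1"
    using strict_journey_first_two_edges[OF assms(2,3,4)] .
  obtain t1' t2 where "t1' \<in> tlabel H {b, c}"
    and cd: "{c, d} \<in> tedges H" "t2 \<in> tlabel H {c, d}" and "t1' < t2"
    using strict_journey_last_two_edges[OF assms(2,3,5)] .
  have "card (tlabel H {b, c}) = 1"
    using assms(1) bc(1) unfolding simple_tgraph_def by blast
  then have "t1' = t1"
    using bc(2) \<open>t1' \<in> tlabel H {b, c}\<close> by (metis card_1_singletonE singletonD)
  show ?thesis
    by (rule strict_journey_three_edges[OF ab bc cd \<open>t0 < t1\<close>])
      (use \<open>t1' < t2\<close> \<open>t1' = t1\<close> assms(3) in auto)
qed

lemma tedge_mutually_reachable: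
  assumes "temporal_graph G" "e \<in> tedges G"
  obtains u v where "e = {u, v}" "(u, v) \<in> strict_reach_arcs G" "(v, u) \<in> strict_reach_arcs G"
proof -
  from assms obtain u v where uv: "u \<noteq> v" "u \<in> tverts G" "v \<in> tverts G" "e = {u, v}"
    and "tlabel G e \<noteq> {}"
    unfolding temporal_graph_def by meson
  then obtain t where "t \<in> tlabel G {u, v}" by blast
  then have "strict_journey G u v" "strict_journey G v u"
    using strict_journey_edge[of u v G t] strict_journey_edge[of v u G t] assms(2) uv
    by (simp_all add: insert_commute)
  then show ?thesis
    using that uv unfolding strict_reach_arcs_def by auto
qed

lemma iso_strict_journey_iff:
  assumes f: "bij_betw f (tverts G) (tverts H)"
    and iso: "\<forall>u\<in>tverts G. \<forall>v\<in>tverts G.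
                (u, v) \<in> strict_reach_arcs G \<longleftrightarrow> (f u, f v) \<in> strict_reach_arcs H"
    and "x \<in> tverts G" "y \<in> tverts G" "x \<noteq> y"
  shows "strict_journey H (f x) (f y) \<longleftrightarrow> strict_journey G x y"
proof -
  have "f x \<in> tverts H" "f y \<in> tverts H" "f x \<noteq> f y"
    using assms(3-5) bij_betw_apply[OF f] inj_onD[OF bij_betw_imp_inj_on[OF f]] by auto
  moreover have "(x, y) \<in> strict_reach_arcs G \<longleftrightarrow> (f x, f y) \<in> strict_reach_arcs H"
    using iso assms(3,4) by blast
  ultimately show ?thesis
    using assms(3-5) by (simp add: strict_reach_arcs_def)
qed

lemma iso_tedges_subset_image:
  assumes "temporal_graph H" and f: "bij_betw f (tverts G) (tverts H)"
    and iso: "\<forall>u\<in>tverts G. \<forall>v\<in>tverts G.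
                (u, v) \<in> strict_reach_arcs G \<longleftrightarrow> (f u, f v) \<in> strict_reach_arcs H"
    and mutual: "\<And>u v. (u, v) \<in> strict_reach_arcs G \<Longrightarrow> (v, u) \<in> strict_reach_arcs G
                   \<Longrightarrow> {u, v} \<in> tedges G"
  shows "tedges H \<subseteq> (\<lambda>e. f ` e) ` tedges G"
proof
  fix e assume "e \<in> tedges H"
  then obtain u v where e: "e = {u, v}"
    and arcs: "(u, v) \<in> strict_reach_arcs H" "(v, u) \<in> strict_reach_arcs H"
    by (rule tedge_mutually_reachable[OF assms(1)])
  then have "u \<in> f ` tverts G" "v \<in> f ` tverts G"
    using bij_betw_imp_surj_on[OF f] unfolding strict_reach_arcs_def by auto
  then obtain x y where "x \<in> tverts G" "y \<in> tverts G" "u = f x" "v = f y"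
    by blast
  with iso arcs have "(x, y) \<in> strict_reach_arcs G" "(y, x) \<in> strict_reach_arcs G"
    by simp_all
  then have "{x, y} \<in> tedges G"
    by (rule mutual)
  moreover have "e = f ` {x, y}"
    using e \<open>u = f x\<close> \<open>v = f y\<close> by simp
  ultimately show "e \<in> (\<lambda>e. f ` e) ` tedges G"
    by blast
qed

definition path4_tgraph :: "nat tgraph" where
  "path4_tgraph = ({0, 1, 2, 3}, {{0, 1}, {1, 2}, {2, 3}},
     \<lambda>e. if e = {0, 1} then {1} else if e = {1, 2} then {1, 2} else {2})"

lemma path4_tgraph_simps:
  "tverts path4_tgraph = {0, 1, 2, 3}"
  "tedges path4_tgraph = {{0, 1}, {1, 2}, {2, 3}}"
  "tlabel path4_tgraph =
     (\<lambda>e. if e = {0, 1} then {1} else if e = {1, 2} then {1, 2} else {2})"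
  by (simp_all add: path4_tgraph_def tverts_def tedges_def tlabel_def)

lemma temporal_graph_path4: "temporal_graph path4_tgraph"
  unfolding temporal_graph_def
proof (intro conjI ballI)
  fix e assume "e \<in> tedges path4_tgraph"
  then have "\<exists>u \<in> {0, 1, 2}. e = {u, u + 1}"
    by (simp add: path4_tgraph_simps eval_nat_numeral)
  then obtain u where u: "u \<in> {0, 1, 2}" "e = {u, u + 1}" ..
  then have "u \<in> tverts path4_tgraph" "u + 1 \<in> tverts path4_tgraph"
    by (auto simp: path4_tgraph_simps)
  with u show "\<exists>x y. x \<noteq> y \<and> x \<in> tverts path4_tgraph \<and> y \<in> tverts path4_tgraph \<and> e = {x, y}"
    by (intro exI[of _ u] exI[of _ "u + 1"]) simp
  show "tlabel path4_tgraph e \<noteq> {}"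
    by (simp add: path4_tgraph_simps)
qed (simp add: path4_tgraph_simps)

lemma path4_journeys: "strict_journey path4_tgraph 0 2" "strict_journey path4_tgraph 1 3"
  by (rule strict_journey_two_edges[of 0 1 _ 1 2 2] strict_journey_two_edges[of 1 2 _ 1 3 2];
      simp add: path4_tgraph_simps doubleton_eq_iff)+

lemma path4_contact:
  assumes "{x, y} \<in> tedges path4_tgraph" "t \<in> tlabel path4_tgraph {x, y}"
  shows "(x = 0 \<and> y = 1 \<or> x = 1 \<and> y = 0) \<and> t = 1 \<or>
    (x = 1 \<and> y = 2 \<or> x = 2 \<and> y = 1) \<and> (t = 1 \<or> t = 2) \<or>
    (x = 2 \<and> y = 3 \<or> x = 3 \<and> y = 2) \<and> t = 2"
  using assms by (auto simp: path4_tgraph_simps doubleton_eq_iff)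

lemma path4_no_journeys:
  "\<not> strict_journey path4_tgraph 0 3"
  "\<not> strict_journey path4_tgraph 2 0"
  "\<not> strict_journey path4_tgraph 3 1"
proof -
  show "\<not> strict_journey path4_tgraph 0 3"
    by (rule not_strict_journey_invariant[where
          P = "\<lambda>x s. x \<noteq> 3 \<and> (x = 1 \<longrightarrow> 2 \<le> s) \<and> (x = 2 \<longrightarrow> 3 \<le> s)"];
        (drule (1) path4_contact)?; auto)
  show "\<not> strict_journey path4_tgraph 2 0"
    by (rule not_strict_journey_invariant[where P = "\<lambda>x s. x \<noteq> 0 \<and> (x = 1 \<longrightarrow> 2 \<le> s)"];
        (drule (1) path4_contact)?; auto)
  show "\<not> strict_journey path4_tgraph 3 1"
    by (rule not_strict_journey_invariant[where
          P = "\<lambda>x s. x \<noteq> 0 \<and> x \<noteq> 1 \<and> (x = 2 \<longrightarrow> 3 \<le> s)"];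
        (drule (1) path4_contact)?; auto)
qed

lemma path4_mutual_arcs:
  assumes "(u, v) \<in> strict_reach_arcs path4_tgraph" "(v, u) \<in> strict_reach_arcs path4_tgraph"
  shows "{u, v} \<in> tedges path4_tgraph"
  using assms path4_no_journeys
  by (auto simp: strict_reach_arcs_def path4_tgraph_simps insert_commute)

theorem mainTheorem2:
  shows "\<exists>G :: nat tgraph. temporal_graph G \<and>
           \<not> (\<exists>H :: nat tgraph. temporal_graph H \<and> simple_tgraph H \<and>
                digraph_iso (tverts G) (strict_reach_arcs G) (tverts H) (strict_reach_arcs H))"
proof (intro exI[of _ path4_tgraph] conjI notI)
  show "temporal_graph path4_tgraph"
    by (rule temporal_graph_path4)
next
  assume "\<exists>H :: nat tgraph. temporal_graph H \<and> simple_tgraph H \<and>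
    digraph_iso (tverts path4_tgraph) (strict_reach_arcs path4_tgraph) (tverts H) (strict_reach_arcs H)"
  then obtain H :: "nat tgraph" and f where H: "temporal_graph H" "simple_tgraph H"
    and f: "bij_betw f (tverts path4_tgraph) (tverts H)"
    and iso: "\<forall>u\<in>tverts path4_tgraph. \<forall>v\<in>tverts path4_tgraph.
      (u, v) \<in> strict_reach_arcs path4_tgraph \<longleftrightarrow> (f u, f v) \<in> strict_reach_arcs H"
    unfolding digraph_iso_def by blast
  have distinct: "distinct [f 0, f 1, f 2, f 3]"
    using bij_betw_imp_inj_on[OF f] by (auto simp: path4_tgraph_simps inj_on_def)
  note journey_iff = iso_strict_journey_iff[OF f iso]
  have "tedges H \<subseteq> {{f 0, f 1}, {f 1, f 2}, {f 2, f 3}}"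
    using iso_tedges_subset_image[OF H(1) f iso path4_mutual_arcs]
    by (simp add: path4_tgraph_simps)
  from simple_tgraph_relay[OF H(2) this distinct] have "strict_journey H (f 0) (f 3)"
    using journey_iff path4_journeys by (simp add: path4_tgraph_simps)
  then show False
    using journey_iff path4_no_journeys by (simp add: path4_tgraph_simps)
qed

end
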